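(* Let $q$ be a prime power, let $p\ge2$ be an integer, let $d\in\{1,\dots,p-1\}$, and fix vectors $x_{d+1},\dots,x_p\in\mathbb{F}_q^d\setminus\{0\}$. For $v_1,\dots,v_d\in\mathbb{F}_q^n$ define $v_i=\sum_{j=1}^dx_i(j)v_j$ for $i=d+1,\dots,p$. Then for every function $f:\mathbb{F}_q^n\to[0,\infty)$, $$\frac{1}{q^{nd}}\sum_{v_1,\dots,v_d\in\mathbb{F}_q^n}f(v_1)f(v_2)\cdots f(v_p)\le\|f\|_1^{d-1}\|f\|_{p-d+1}^{p-d+1}.$$
   Context: For $f:\mathbb{F}_q^n\to\mathbb{R}$ and $r\in(0,\infty)$, $\|f\|_r=\big(q^{-n}\sum_{x\in\mathbb{F}_q^n}|f(x)|^r\big)^{1/r}$. $x_i(j)$ denotes the $j$-th coordinate of $x_i$. *)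

theory Defs
  imports "HOL-Analysis.Analysis"
begin

definition lrnorm :: "('b::finite \<Rightarrow> real) \<Rightarrow> real \<Rightarrow> real" where
  "lrnorm f r = ((\<Sum>x\<in>UNIV. \<bar>f x\<bar> powr r) / real CARD('b)) powr (1 / r)"

text \<open>Given v_1..v_d (a map on {1..d}) and coefficient vectors x_i in F_q^d
  (x i j is the j-th coordinate, j in {1..d}), the extended family v_1..v_p.\<close>
definition extvec :: "nat \<Rightarrow> (nat \<Rightarrow> nat \<Rightarrow> 'a::field) \<Rightarrow> (nat \<Rightarrow> 'a ^ 'n) \<Rightarrow> nat \<Rightarrow> 'a ^ 'n" where
  "extvec d x v i = (if i \<le> d then v i else (\<chi> k. \<Sum>j=1..d. x i j * (v j $ k)))"

end

theory Submission
  imports Defs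
begin

text \<open>Write \<open>m = p - d\<close> and split the product into \<open>f(v\<^sub>1)\<cdots>f(v\<^sub>d)\<close> and the \<open>m\<close>
  factors \<open>f(v\<^sub>i)\<close>, \<open>i > d\<close>. AM-GM bounds the latter by the mean of the \<open>f(v\<^sub>i)\<^sup>m\<close>.
  For each \<open>i > d\<close> pick \<open>j\<close> with \<open>x\<^sub>i(j) \<noteq> 0\<close>; Young's inequality
  \<open>f(v\<^sub>j) f(v\<^sub>i)\<^sup>m \<le> (f(v\<^sub>j)\<^sup>m\<^sup>+\<^sup>1 + m f(v\<^sub>i)\<^sup>m\<^sup>+\<^sup>1)/(m+1)\<close> leaves only one factor
  depending on \<open>v\<^sub>i\<close>. Since \<open>x\<^sub>i(j) \<noteq> 0\<close>, replacing \<open>v\<^sub>j\<close> by \<open>v\<^sub>i\<close> is a bijection of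
  \<open>(\<bbbF>\<^sub>q\<^sup>n)\<^sup>d\<close>, so both terms sum to \<open>(\<Sum> f)\<^sup>d\<^sup>-\<^sup>1 \<Sum> f\<^sup>m\<^sup>+\<^sup>1\<close>.\<close>

lemma prod_le_mean_of_powers:
  fixes a :: "'b \<Rightarrow> real"
  assumes "finite S" "S \<noteq> {}" "\<And>i. i \<in> S \<Longrightarrow> a i \<ge> 0"
  shows "(\<Prod>i\<in>S. a i) \<le> (\<Sum>i\<in>S. a i ^ card S) / card S"
proof -
  have card: "card S > 0" using assms by (simp add: card_gt_0_iff)
  have prod_nonneg: "(\<Prod>i\<in>S. a i) \<ge> 0" using assms by (simp add: prod_nonneg)
  have "(\<Prod>i\<in>S. a i) = root (card S) ((\<Prod>i\<in>S. a i) ^ card S)"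
    using card prod_nonneg by (simp add: real_root_pos_unique)
  also have "\<dots> = (\<Prod>i\<in>S. a i ^ card S) powr (1 / card S)"
    using card prod_nonneg by (simp add: root_powr_inverse prod_power_distrib[symmetric])
  also have "\<dots> \<le> (\<Sum>i\<in>S. a i ^ card S / card S)"
    using arith_geom_mean[of S "\<lambda>i. a i ^ card S"] assms by simp
  finally show ?thesis by (simp add: sum_divide_distrib)
qed

lemma young_mult_power_le:
  fixes \<alpha> \<beta> :: real
  assumes "\<alpha> \<ge> 0" "\<beta> \<ge> 0"
  shows "\<alpha> * \<beta> ^ m \<le> (\<alpha> ^ (m + 1) + real m * \<beta> ^ (m + 1)) / (real m + 1)"
proof -
  define a where "a = (\<lambda>i::nat. if i = 0 then \<alpha> else \<beta>)"
  have "(\<Prod>i\<in>{0..m}. a i) \<le> (\<Sum>i\<in>{0..m}. a i ^ card {0..m}) / card {0..m}"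
    by (rule prod_le_mean_of_powers) (use assms in \<open>auto simp: a_def\<close>)
  moreover have "{0..m} = insert 0 {1..m}" by auto
  ultimately show ?thesis by (simp add: a_def add.commute)
qed

lemma lrnorm_power_eq:
  fixes f :: "'b::finite \<Rightarrow> real"
  assumes "\<And>y. f y \<ge> 0" "n > 0"
  shows "lrnorm f (real n) ^ n = (\<Sum>y\<in>UNIV. f y ^ n) / CARD('b)"
proof -
  have "\<bar>f y\<bar> powr real n = f y ^ n" for y
    using assms powr_realpow'[of "f y" n] by simp
  moreover have "(\<Sum>y\<in>UNIV. f y ^ n) / CARD('b) \<ge> 0"
    using assms by (simp add: sum_nonneg)
  ultimately show ?thesis
    using assms by (simp add: lrnorm_def root_powr_inverse[symmetric])
qed

lemma sum_PiE_prod_except: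
  fixes f g :: "'c::finite \<Rightarrow> real"
  assumes "j \<in> {1..d}"
  shows "(\<Sum>v\<in>PiE {1..d} (\<lambda>_. UNIV). (\<Prod>k\<in>{1..d}-{j}. f (v k)) * g (v j))
         = (\<Sum>y\<in>UNIV. f y) ^ (d - 1) * (\<Sum>y\<in>UNIV. g y)"
proof -
  define h where "h = (\<lambda>k. if k = j then g else f)"
  have split: "(\<Prod>k\<in>{1..d}. h k (w k)) = (\<Prod>k\<in>{1..d}-{j}. f (w k)) * g (w j)" for w
  proof -
    have "(\<Prod>k\<in>{1..d}-{j}. h k (w k)) = (\<Prod>k\<in>{1..d}-{j}. f (w k))"
      by (rule prod.cong) (auto simp: h_def)
    then show ?thesis using assms by (simp add: prod.remove h_def)
  qed
  have "(\<Sum>v\<in>PiE {1..d} (\<lambda>_. UNIV). (\<Prod>k\<in>{1..d}-{j}. f (v k)) * g (v j))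
        = (\<Sum>v\<in>PiE {1..d} (\<lambda>_. UNIV). \<Prod>k\<in>{1..d}. h k (v k))"
    by (simp only: split)
  also have "\<dots> = (\<Prod>k\<in>{1..d}. \<Sum>y\<in>UNIV. h k y)"
    by (rule prod_sum_PiE[symmetric]) auto
  also have "\<dots> = (\<Sum>y\<in>UNIV. g y) * (\<Prod>k\<in>{1..d}-{j}. \<Sum>y\<in>UNIV. f y)"
    using assms by (simp add: prod.remove h_def)
  finally show ?thesis using assms by (simp add: mult.commute)
qed

lemma bij_betw_PiE_update_lincomb:
  fixes c :: "nat \<Rightarrow> 'a::{field,finite}"
  assumes j: "j \<in> {1..d}" and cj: "c j \<noteq> 0"
  shows "bij_betw (\<lambda>v. v(j := (\<chi> t. \<Sum>l=1..d. c l * (v l $ t))))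
           (PiE {1..d} (\<lambda>_. UNIV :: ('a ^ 'n) set)) (PiE {1..d} (\<lambda>_. UNIV))"
proof -
  define U where "U = PiE {1..d} (\<lambda>_. UNIV :: ('a ^ 'n) set)"
  define W where "W = (\<lambda>v::nat \<Rightarrow> 'a ^ 'n. (\<chi> t. \<Sum>l=1..d. c l * (v l $ t)))"
  define \<sigma> where "\<sigma> = (\<lambda>v. v(j := W v))"
  have W_split: "W v $ t = c j * (v j $ t) + (\<Sum>l\<in>{1..d}-{j}. c l * (v l $ t))" for v t
    using j unfolding W_def by (simp add: sum.remove)
  have "inj_on \<sigma> U"
  proof (rule inj_onI)
    fix v v' assume "\<sigma> v = \<sigma> v'"
    have other: "v k = v' k" if "k \<noteq> j" for k
      using fun_cong[OF \<open>\<sigma> v = \<sigma> v'\<close>, of k] that by (simp add: \<sigma>_def)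
    have "W v = W v'" using fun_cong[OF \<open>\<sigma> v = \<sigma> v'\<close>, of j] by (simp add: \<sigma>_def)
    moreover have "(\<Sum>l\<in>{1..d}-{j}. c l * (v l $ t)) = (\<Sum>l\<in>{1..d}-{j}. c l * (v' l $ t))" for t
      by (rule sum.cong) (auto simp: other)
    ultimately have "c j * (v j $ t) = c j * (v' j $ t)" for t
      using W_split[of v t] W_split[of v' t] by (metis add_right_cancel)
    then have "v j = v' j" using cj by (simp add: vec_eq_iff)
    show "v = v'"
    proof
      fix k show "v k = v' k" using other \<open>v j = v' j\<close> by (cases "k = j") auto
    qed
  qed
  moreover have "\<sigma> ` U \<subseteq> U" using j unfolding U_def \<sigma>_def by (auto simp: PiE_iff)
  moreover have "finite U" unfolding U_def by (simp add: finite_PiE)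
  ultimately show ?thesis
    using endo_inj_surj unfolding bij_betw_def U_def \<sigma>_def W_def by blast
qed

lemma sum_PiE_prod_except_extvec:
  fixes f g :: "('a::{field,finite}) ^ 'n \<Rightarrow> real"
  assumes "d < i" "j \<in> {1..d}" "x i j \<noteq> 0"
  shows "(\<Sum>v\<in>PiE {1..d} (\<lambda>_. UNIV). (\<Prod>k\<in>{1..d}-{j}. f (v k)) * g (extvec d x v i))
         = (\<Sum>y\<in>UNIV. f y) ^ (d - 1) * (\<Sum>y\<in>UNIV. g y)"
proof -
  let ?h = "\<lambda>v. (\<Prod>k\<in>{1..d}-{j}. f (v k)) * g (v j)"
  have "(\<Sum>v\<in>PiE {1..d} (\<lambda>_. UNIV). (\<Prod>k\<in>{1..d}-{j}. f (v k)) * g (extvec d x v i))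
        = (\<Sum>v\<in>PiE {1..d} (\<lambda>_. UNIV). ?h (v(j := (\<chi> t. \<Sum>l=1..d. x i l * (v l $ t)))))"
    using assms by (intro sum.cong) (auto simp: extvec_def intro!: prod.cong)
  also have "\<dots> = (\<Sum>v\<in>PiE {1..d} (\<lambda>_. UNIV). ?h v)"
    by (rule sum.reindex_bij_betw[OF bij_betw_PiE_update_lincomb[of j d "x i", OF assms(2,3)]])
  also have "\<dots> = (\<Sum>y\<in>UNIV. f y) ^ (d - 1) * (\<Sum>y\<in>UNIV. g y)"
    by (rule sum_PiE_prod_except[OF assms(2)])
  finally show ?thesis .
qed

lemma prod_extvec_le_young_sum:
  fixes f :: "('a::field) ^ 'n \<Rightarrow> real"
  assumes "d < p" and J: "\<And>i. i \<in> {d+1..p} \<Longrightarrow> J i \<in> {1..d}" and f_nonneg: "\<And>y. f y \<ge> 0"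
  defines "m \<equiv> p - d"
  shows "(\<Prod>i=1..p. f (extvec d x v i))
         \<le> (\<Sum>i=d+1..p. (\<Prod>k\<in>{1..d}-{J i}. f (v k))
                          * (f (v (J i)) ^ (m + 1) + real m * f (extvec d x v i) ^ (m + 1))) / ((real m + 1) * real m)"
proof -
  define Q where "Q = (\<Prod>k=1..d. f (v k))"
  have "{1..p} = {1..d} \<union> {d+1..p}" using assms by auto
  then have "(\<Prod>i=1..p. f (extvec d x v i)) = Q * (\<Prod>i=d+1..p. f (extvec d x v i))"
    by (simp add: prod.union_disjoint Q_def extvec_def)
  also have "\<dots> \<le> Q * ((\<Sum>i=d+1..p. f (extvec d x v i) ^ m) / m)"
    using prod_le_mean_of_powers[of "{d+1..p}" "\<lambda>i. f (extvec d x v i)"] assms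
    by (intro mult_left_mono) (auto simp: Q_def prod_nonneg)
  also have "\<dots> = (\<Sum>i=d+1..p. Q * f (extvec d x v i) ^ m / m)"
    by (simp add: sum_distrib_left sum_divide_distrib)
  also have "\<dots> \<le> (\<Sum>i=d+1..p. (\<Prod>k\<in>{1..d}-{J i}. f (v k))
                   * (f (v (J i)) ^ (m + 1) + real m * f (extvec d x v i) ^ (m + 1)) / ((real m + 1) * real m))"
  proof (rule sum_mono)
    fix i assume i: "i \<in> {d+1..p}"
    define P where "P = (\<Prod>k\<in>{1..d}-{J i}. f (v k))"
    have "Q = P * f (v (J i))" unfolding Q_def P_def using J[OF i] by (simp add: prod.remove)
    then have "Q * f (extvec d x v i) ^ m = P * (f (v (J i)) * f (extvec d x v i) ^ m)" by simp
    also have "\<dots> \<le> P * ((f (v (J i)) ^ (m + 1) + real m * f (extvec d x v i) ^ (m + 1)) / (real m + 1))"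
      by (rule mult_left_mono[OF young_mult_power_le]) (auto simp: P_def prod_nonneg f_nonneg)
    finally have "Q * f (extvec d x v i) ^ m / m
        \<le> P * ((f (v (J i)) ^ (m + 1) + real m * f (extvec d x v i) ^ (m + 1)) / (real m + 1)) / m"
      by (rule divide_right_mono) simp
    then show "Q * f (extvec d x v i) ^ m / m
        \<le> P * (f (v (J i)) ^ (m + 1) + real m * f (extvec d x v i) ^ (m + 1)) / ((real m + 1) * real m)"
      by (simp only: times_divide_eq_right divide_divide_eq_left)
  qed
  finally show ?thesis by (simp add: sum_divide_distrib)
qed

lemma sum_PiE_prod_extvec_le:
  fixes f :: "('a::{field,finite}) ^ 'n \<Rightarrow> real"
  assumes "d < p" and nonzero: "\<forall>i\<in>{d+1..p}. \<exists>j\<in>{1..d}. x i j \<noteq> 0"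
    and f_nonneg: "\<And>y. f y \<ge> 0"
  shows "(\<Sum>v\<in>PiE {1..d} (\<lambda>_. UNIV). \<Prod>i=1..p. f (extvec d x v i))
         \<le> (\<Sum>y\<in>UNIV. f y) ^ (d - 1) * (\<Sum>y\<in>UNIV. f y ^ (p - d + 1))"
proof -
  define m where "m = p - d"
  define S where "S = (\<Sum>y\<in>UNIV. f y) ^ (d - 1) * (\<Sum>y\<in>UNIV. f y ^ (m + 1))"
  obtain J where J: "\<And>i. i \<in> {d+1..p} \<Longrightarrow> J i \<in> {1..d} \<and> x i (J i) \<noteq> 0"
    using bchoice[of "{d+1..p}" "\<lambda>i j. j \<in> {1..d} \<and> x i j \<noteq> 0"] nonzero by blast
  have term_sum: "(\<Sum>v\<in>PiE {1..d} (\<lambda>_. UNIV). (\<Prod>k\<in>{1..d}-{J i}. f (v k))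
                    * (f (v (J i)) ^ (m + 1) + real m * f (extvec d x v i) ^ (m + 1))) = (real m + 1) * S"
    if i: "i \<in> {d+1..p}" for i
  proof -
    let ?P = "\<lambda>v. \<Prod>k\<in>{1..d}-{J i}. f (v k)"
    have "(\<Sum>v\<in>PiE {1..d} (\<lambda>_. UNIV). ?P v * (f (v (J i)) ^ (m + 1) + real m * f (extvec d x v i) ^ (m + 1)))
          = (\<Sum>v\<in>PiE {1..d} (\<lambda>_. UNIV). ?P v * f (v (J i)) ^ (m + 1))
            + real m * (\<Sum>v\<in>PiE {1..d} (\<lambda>_. UNIV). ?P v * f (extvec d x v i) ^ (m + 1))"
      by (simp only: distrib_left sum.distrib sum_distrib_left mult.left_commute)
    also have "\<dots> = S + real m * S"
      using J[OF i] i unfolding S_def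
      using sum_PiE_prod_except[of "J i" d f "\<lambda>y. f y ^ (m + 1)"]
        sum_PiE_prod_except_extvec[of d i "J i" x f "\<lambda>y. f y ^ (m + 1)"]
      by simp
    finally show ?thesis by (simp add: algebra_simps)
  qed
  have "(\<Sum>v\<in>PiE {1..d} (\<lambda>_. UNIV). \<Prod>i=1..p. f (extvec d x v i))
        \<le> (\<Sum>v\<in>PiE {1..d} (\<lambda>_. UNIV). (\<Sum>i=d+1..p. (\<Prod>k\<in>{1..d}-{J i}. f (v k))
             * (f (v (J i)) ^ (m + 1) + real m * f (extvec d x v i) ^ (m + 1))) / ((real m + 1) * real m))"
    unfolding m_def using J f_nonneg \<open>d < p\<close>
    by (intro sum_mono prod_extvec_le_young_sum) auto
  also have "\<dots> = (\<Sum>v\<in>PiE {1..d} (\<lambda>_. UNIV). \<Sum>i=d+1..p. (\<Prod>k\<in>{1..d}-{J i}. f (v k))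
             * (f (v (J i)) ^ (m + 1) + real m * f (extvec d x v i) ^ (m + 1))) / ((real m + 1) * real m)"
    by (rule sum_divide_distrib[symmetric])
  also have "\<dots> = (\<Sum>i=d+1..p. (real m + 1) * S) / ((real m + 1) * real m)"
    by (subst sum.swap) (simp only: sum.cong[OF refl term_sum])
  also have "\<dots> = S" using \<open>d < p\<close> by (simp add: m_def)
  finally show ?thesis by (simp add: S_def m_def)
qed

theorem lemmaA2:
  fixes f :: "('a::{field,finite}) ^ 'n \<Rightarrow> real"
    and x :: "nat \<Rightarrow> nat \<Rightarrow> 'a"
    and p d :: nat
  assumes "p \<ge> 2" and "1 \<le> d" and "d \<le> p - 1"
    and "\<forall>i\<in>{d+1..p}. \<exists>j\<in>{1..d}. x i j \<noteq> 0"
    and "\<forall>y. f y \<ge> 0"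
  shows "(1 / real CARD('a ^ 'n) ^ d) *
           (\<Sum>v\<in>PiE {1..d} (\<lambda>_. UNIV). \<Prod>i=1..p. f (extvec d x v i))
         \<le> lrnorm f 1 ^ (d - 1) * lrnorm f (real (p - d + 1)) ^ (p - d + 1)"
proof -
  define N where "N = real CARD('a ^ 'n)"
  define m where "m = p - d + 1"
  have f_nonneg: "\<And>y. f y \<ge> 0" using assms by simp
  have "N > 0" "m > 0" by (simp_all add: N_def m_def)
  have "(1 / N ^ d) * (\<Sum>v\<in>PiE {1..d} (\<lambda>_. UNIV). \<Prod>i=1..p. f (extvec d x v i))
        \<le> (1 / N ^ d) * ((\<Sum>y\<in>UNIV. f y) ^ (d - 1) * (\<Sum>y\<in>UNIV. f y ^ m))"
    using sum_PiE_prod_extvec_le[of d p x f] assms \<open>N > 0\<close>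
    by (intro mult_left_mono) (auto simp: m_def)
  also have "\<dots> = ((\<Sum>y\<in>UNIV. f y) / N) ^ (d - 1) * ((\<Sum>y\<in>UNIV. f y ^ m) / N)"
    using \<open>1 \<le> d\<close> by (simp add: power_divide power_eq_if[of N d])
  also have "\<dots> = lrnorm f 1 ^ (d - 1) * lrnorm f (real m) ^ m"
    using lrnorm_power_eq[of f 1] lrnorm_power_eq[of f m] f_nonneg \<open>m > 0\<close>
    by (simp add: N_def)
  finally show ?thesis by (simp only: N_def m_def)
qed

end
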